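(* Let $f:\Sigma\to O$ be a social choice function. (i) If $f$ is pseudomonotone, then for every $\varepsilon>0$ there is a lex-truthful randomized mechanism that $\varepsilon$-implements $f$. (ii) Conversely, if for some $\varepsilon<\frac12$ there is a lex-truthful randomized mechanism that $\varepsilon$-implements $f$, then $f$ is pseudomonotone.
   Context: Setting: a set $N$ of $n$ agents, a finite set $O$ of $m$ outcomes, and for each agent $j$ a set $\Sigma_j$ of allowed strict total orders on $O$; $\Sigma=\prod_j\Sigma_j$. For a strict order $\succ$, $\succ(\ell)$ is its $\ell$-th ranked outcome and $\mathrm{pos}_\succ(o)$ the position of $o$; $a\succeq b$ means $a\succ b$ or $a=b$. A social choice function is a map $f:\Sigma\to O$. $f$ is pseudomonotone if for every agent $j$, every $\succ_{-j}$, and all $\succ_j,\succ'_j\in\Sigma_j$, setting $o=f(\succ_j,\succ_{-j})$ and $o'=f(\succ'_j,\succ_{-j})$, either $o\succeq_j o'$, or there is an outcome $o''$ with $o''\succ_j o'$ and $\mathrm{pos}_{\succ_j}(o'')<\mathrm{pos}_{\succ'_j}(o'')$. A randomized mechanism maps profiles to probability distributions over $O$; it $\varepsilon$-implements $f$ if $\Pr[\mathcal{M}(\succ)=f(\succ)]\ge1-\varepsilon$ for all $\succ\in\Sigma$. For lotteries $p\ne q$, $p$ lexicographically dominates $q$ w.r.t. $\succ$ if there is $i$ with $p(\succ(i))>q(\succ(i))$ and $p(\succ(\ell))=q(\succ(\ell))$ for all $\ell<i$. $\mathcal{M}$ is lex-truthful if for all $j$, $\succ_j,\succ'_j\in\Sigma_j$,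 $\succ_{-j}$: either $\mathcal{M}(\succ_j,\succ_{-j})=\mathcal{M}(\succ'_j,\succ_{-j})$ (as distributions) or $\mathcal{M}(\succ_j,\succ_{-j})$ lexicographically dominates $\mathcal{M}(\succ'_j,\succ_{-j})$ w.r.t. $\succ_j$. *)

theory Defs
  imports "HOL-Probability.Probability_Mass_Function"
begin

text \<open>A strict total order on the outcomes is represented by its ranking list
(best outcome first): a list that enumerates every outcome exactly once.
Positions are 0-based (pos r o), the l-th ranked outcome is r ! l.\<close>

definition ranking :: "'o list \<Rightarrow> bool" where
  "ranking r \<longleftrightarrow> distinct r \<and> set r = UNIV"

definition pos :: "'o list \<Rightarrow> 'o \<Rightarrow> nat" where
  "pos r a = (LEAST i. i < length r \<and> r ! i = a)"

definition prefers :: "'o list \<Rightarrow> 'o \<Rightarrow> 'o \<Rightarrow> bool" where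
  "prefers r a b \<longleftrightarrow> pos r a < pos r b"

definition weakly_prefers :: "'o list \<Rightarrow> 'o \<Rightarrow> 'o \<Rightarrow> bool" where
  "weakly_prefers r a b \<longleftrightarrow> prefers r a b \<or> a = b"

definition profile :: "('n \<Rightarrow> 'o list set) \<Rightarrow> ('n \<Rightarrow> 'o list) \<Rightarrow> bool" where
  "profile Sig p \<longleftrightarrow> (\<forall>j. p j \<in> Sig j)"

definition pseudomonotone ::
  "('n \<Rightarrow> 'o list set) \<Rightarrow> (('n \<Rightarrow> 'o list) \<Rightarrow> 'o) \<Rightarrow> bool" where
  "pseudomonotone Sig f \<longleftrightarrow>
     (\<forall>j p r r'. profile Sig p \<and> r \<in> Sig j \<and> r' \<in> Sig j \<longrightarrow>
        (let o1 = f (p(j := r)); o2 = f (p(j := r')) in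
          weakly_prefers r o1 o2 \<or>
          (\<exists>o3. prefers r o3 o2 \<and> pos r o3 < pos r' o3)))"

definition eps_implements ::
  "('n \<Rightarrow> 'o list set) \<Rightarrow> (('n \<Rightarrow> 'o list) \<Rightarrow> 'o pmf) \<Rightarrow> (('n \<Rightarrow> 'o list) \<Rightarrow> 'o) \<Rightarrow> real \<Rightarrow> bool" where
  "eps_implements Sig M f \<epsilon> \<longleftrightarrow> (\<forall>p. profile Sig p \<longrightarrow> pmf (M p) (f p) \<ge> 1 - \<epsilon>)"

definition lex_dominates :: "'o list \<Rightarrow> 'o pmf \<Rightarrow> 'o pmf \<Rightarrow> bool" where
  "lex_dominates r P Q \<longleftrightarrow> P \<noteq> Q \<and>
     (\<exists>i < length r. pmf P (r ! i) > pmf Q (r ! i) \<and>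
        (\<forall>l < i. pmf P (r ! l) = pmf Q (r ! l)))"

definition lex_truthful ::
  "('n \<Rightarrow> 'o list set) \<Rightarrow> (('n \<Rightarrow> 'o list) \<Rightarrow> 'o pmf) \<Rightarrow> bool" where
  "lex_truthful Sig M \<longleftrightarrow>
     (\<forall>j p r r'. profile Sig p \<and> r \<in> Sig j \<and> r' \<in> Sig j \<longrightarrow>
        M (p(j := r)) = M (p(j := r')) \<or> lex_dominates r (M (p(j := r))) (M (p(j := r'))))"

end

theory Submission
  imports Defs
begin

text \<open>
(i) Mix f with Borda voting: with probability 1 - e output f p, otherwise pick an agent uniformly
at random and draw an outcome with probability proportional to its Borda score m - pos in that
agent's ranking. When agent j reports r instead of r', the Borda part of the lottery first changes
at the first position k where r and r' differ, and there it increases the mass of r ! k. The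
f-part only moves mass from f(r') to f(r). Pseudomonotonicity says that either f(r) precedes
f(r') in r and wins before position k, or f(r') lies strictly behind position k; in both cases the
difference of the two lotteries is lexicographically positive w.r.t. r.

(ii) Conversely, if \<epsilon> < 1/2 and o1 = f(r), o2 = f(r') violate pseudomonotonicity, then no outcome
ranked above o2 in r moves up in r', so r and r' agree up to the position of o2 in r. The lottery
for r has less mass on o2, so its lexicographic advantage w.r.t. r is decided above o2, at a
position where r' agrees with r; there it contradicts the advantage of the lottery for r' w.r.t. r'.
\<close>

lemma length_ranking: "ranking (r::'o::finite list) \<Longrightarrow> length r = CARD('o)"
  unfolding ranking_def by (metis distinct_card)

lemma
  assumes "ranking r"
  shows pos_less_length: "pos r a < length r" and nth_pos: "r ! pos r a = a"
proof -
  from assms obtain i where "i < length r \<and> r ! i = a"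
    unfolding ranking_def by (metis UNIV_I in_set_conv_nth)
  then have "pos r a < length r \<and> r ! pos r a = a"
    unfolding pos_def by (rule LeastI)
  then show "pos r a < length r" "r ! pos r a = a" by auto
qed

lemma pos_nth:
  assumes "ranking r" "i < length r"
  shows "pos r (r ! i) = i"
proof -
  have "distinct r" using assms(1) unfolding ranking_def by simp
  moreover have "pos r (r ! i) < length r" "r ! pos r (r ! i) = r ! i"
    using assms(1) by (rule pos_less_length, rule nth_pos)
  ultimately show ?thesis using assms(2) nth_eq_iff_index_eq by blast
qed

lemma nth_eq_iff_pos_eq:
  assumes "ranking r" "l < length r"
  shows "r ! l = a \<longleftrightarrow> pos r a = l"
  using assms nth_pos pos_nth by metis

lemma bij_betw_pos:
  assumes "ranking (r::'o::finite list)"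
  shows "bij_betw (pos r) UNIV {..<CARD('o)}"
proof (rule bij_betw_imageI)
  show "inj (pos r)" by (metis assms inj_onI nth_pos)
  show "range (pos r) = {..<CARD('o)}"
  proof
    show "range (pos r) \<subseteq> {..<CARD('o)}"
      using pos_less_length[OF assms] length_ranking[OF assms] by auto
    show "{..<CARD('o)} \<subseteq> range (pos r)"
    proof
      fix k assume "k \<in> {..<CARD('o)}"
      then have "pos r (r ! k) = k" using pos_nth[OF assms] length_ranking[OF assms] by simp
      then show "k \<in> range (pos r)" by (metis rangeI)
    qed
  qed
qed

lemma least_difference:
  assumes "\<exists>l<k. ys ! l \<noteq> xs ! l"
  obtains l where "l < k" "ys ! l \<noteq> xs ! l" "\<forall>l'<l. ys ! l' = xs ! l'"
proof -
  obtain l where l: "l < k" "ys ! l \<noteq> xs ! l"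
    and least: "\<forall>l'<l. \<not> (l' < k \<and> ys ! l' \<noteq> xs ! l')"
    using assms exists_least_iff[of "\<lambda>l. l < k \<and> ys ! l \<noteq> xs ! l"] by blast
  have "\<forall>l'<l. ys ! l' = xs ! l'" using least l(1) by auto
  with l show thesis by (rule that)
qed

lemma pos_eq_if_nth_eq:
  assumes "ranking (r::'o::finite list)" "ranking r'" "l < length r" "r' ! l = r ! l"
  shows "pos r' (r ! l) = l"
  using assms pos_nth[OF assms(2), of l] length_ranking[OF assms(1)] length_ranking[OF assms(2)]
  by simp

lemma pos_gt_at_first_difference:
  assumes r: "ranking (r::'o::finite list)" and r': "ranking r'"
    and k: "k < length r" "r' ! k \<noteq> r ! k" and agree: "\<forall>l<k. r' ! l = r ! l"
  shows "k < pos r' (r ! k)"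
proof (rule ccontr)
  assume "\<not> k < pos r' (r ! k)"
  moreover have "pos r' (r ! k) \<noteq> k" using nth_pos[OF r', of "r ! k"] k(2) by metis
  ultimately have lt: "pos r' (r ! k) < k" by simp
  then have "r ! pos r' (r ! k) = r ! k" using agree nth_pos[OF r'] by metis
  then have "pos r' (r ! k) = k" using pos_nth[OF r] lt k(1) by (metis order.strict_trans)
  with lt show False by simp
qed

lemma prefix_eq_if_pos_le:
  assumes r: "ranking (r::'o::finite list)" and r': "ranking r'"
    and le: "\<forall>a. pos r a < k \<longrightarrow> pos r' a \<le> pos r a" and k: "k \<le> length r"
  shows "\<forall>l<k. r' ! l = r ! l"
proof (rule ccontr)
  assume "\<not> ?thesis"
  then have "\<exists>l<k. r' ! l \<noteq> r ! l" by simp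
  then obtain l where l: "l < k" "r' ! l \<noteq> r ! l" "\<forall>l'<l. r' ! l' = r ! l'"
    by (rule least_difference)
  have "pos r (r ! l) = l" using pos_nth[OF r] l(1) k by simp
  then have "pos r' (r ! l) \<le> l" using le[rule_format, of "r ! l"] l(1) by simp
  moreover have "l < pos r' (r ! l)" using pos_gt_at_first_difference[OF r r'] l k by simp
  ultimately show False by simp
qed

definition lex_leads :: "'o list \<Rightarrow> ('o \<Rightarrow> real) \<Rightarrow> nat \<Rightarrow> bool" where
  "lex_leads r D i \<longleftrightarrow> i < length r \<and> D (r ! i) > 0 \<and> (\<forall>l<i. D (r ! l) = 0)"

lemma lex_dominates_iff_lex_leads:
  "lex_dominates r P Q \<longleftrightarrow> (\<exists>i. lex_leads r (\<lambda>a. pmf P a - pmf Q a) i)"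
  unfolding lex_dominates_def lex_leads_def by auto

lemma lex_leads_add:
  assumes "lex_leads r D i" "\<forall>l<i. E (r ! l) = 0" "E (r ! i) \<ge> 0"
  shows "lex_leads r (\<lambda>a. D a + E a) i"
  using assms unfolding lex_leads_def by auto

lemma lex_leads_scale:
  assumes "lex_leads r D i" "c > 0"
  shows "lex_leads r (\<lambda>a. c * D a) i"
  using assms unfolding lex_leads_def by simp

lemma lex_leads_less_if_negative:
  assumes "lex_leads r D i" "j < length r" "D (r ! j) < 0"
  shows "i < j"
  using assms unfolding lex_leads_def by (metis less_asym linorder_neqE_nat)

lemma not_lex_leads_opposite:
  assumes "lex_leads r D i" "lex_leads r' (\<lambda>a. - D a) i'" "\<forall>l\<le>i. r' ! l = r ! l"
  shows False
proof (cases "i' < i")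
  case True
  then show False using assms unfolding lex_leads_def by auto
next
  case False
  then have "i \<le> i'" by simp
  then have "D (r' ! i) \<le> 0" using assms(2) unfolding lex_leads_def
    by (cases "i = i'") auto
  moreover have "r' ! i = r ! i" using assms(3) by simp
  ultimately show False using assms(1) unfolding lex_leads_def by simp
qed

lemma lex_leads_outcome_shift:
  assumes r: "ranking r" and before: "pos r o1 < pos r o2"
  shows "lex_leads r (\<lambda>a. of_bool (a = o1) - of_bool (a = o2)) (pos r o1)"
proof -
  have "r ! l \<noteq> o1 \<and> r ! l \<noteq> o2" if "l < pos r o1" for l
    using that before pos_less_length[OF r, of o1] nth_eq_iff_pos_eq[OF r] by auto
  then show ?thesis
    using before pos_less_length[OF r, of o1] nth_pos[OF r, of o1] unfolding lex_leads_def by auto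
qed

lemma pmf_add_pmf_le_1:
  assumes "a \<noteq> b"
  shows "pmf (P::'o::finite pmf) a + pmf P b \<le> 1"
proof -
  have "pmf P a + pmf P b = measure (measure_pmf P) {a, b}"
    using assms by (simp add: measure_measure_pmf_finite)
  also have "\<dots> \<le> 1" by (rule measure_pmf.prob_le_1)
  finally show ?thesis .
qed

lemma lex_truthfulD:
  assumes "lex_truthful Sig M" "profile Sig p" "r \<in> Sig j" "r' \<in> Sig j"
    and "M (p(j := r)) \<noteq> M (p(j := r'))"
  shows "lex_dominates r (M (p(j := r))) (M (p(j := r')))"
  using assms(1)[unfolded lex_truthful_def, rule_format, of p r j r'] assms(2-) by simp

lemma pseudomonotone_if_lex_truthful_implementation:
  fixes Sig :: "'n \<Rightarrow> 'o::finite list set"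
  assumes rankings: "\<forall>j. \<forall>r \<in> Sig j. ranking r" and "\<epsilon> < 1/2"
    and truthful: "lex_truthful Sig M" and implements: "eps_implements Sig M f \<epsilon>"
  shows "pseudomonotone Sig f"
  unfolding pseudomonotone_def Let_def
proof (intro allI impI)
  fix j p r r'
  assume A: "profile Sig p \<and> r \<in> Sig j \<and> r' \<in> Sig j"
  define P where "P = M (p(j := r))"
  define Q where "Q = M (p(j := r'))"
  define o1 where "o1 = f (p(j := r))"
  define o2 where "o2 = f (p(j := r'))"
  define D where "D = (\<lambda>a. pmf P a - pmf Q a)"
  have r: "ranking r" and r': "ranking r'" using A rankings by auto
  have "profile Sig (p(j := r))" "profile Sig (p(j := r'))"
    using A unfolding profile_def by auto
  then have P_o1: "pmf P o1 \<ge> 1 - \<epsilon>" and Q_o2: "pmf Q o2 \<ge> 1 - \<epsilon>"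
    using implements unfolding eps_implements_def P_def Q_def o1_def o2_def by auto
  show "weakly_prefers r o1 o2 \<or> (\<exists>o3. prefers r o3 o2 \<and> pos r o3 < pos r' o3)"
  proof (rule ccontr)
    assume "\<not> ?thesis"
    then have "o1 \<noteq> o2" and no_rise: "\<forall>o3. pos r o3 < pos r o2 \<longrightarrow> pos r' o3 \<le> pos r o3"
      unfolding weakly_prefers_def prefers_def by auto
    then have "pmf P o1 + pmf P o2 \<le> 1" "pmf Q o1 + pmf Q o2 \<le> 1"
      by (simp_all add: pmf_add_pmf_le_1)
    then have "D o2 < 0"
      using P_o1 Q_o2 \<open>\<epsilon> < 1/2\<close> unfolding D_def by linarith
    then have "P \<noteq> Q" unfolding D_def by auto
    then have "lex_dominates r P Q" "lex_dominates r' Q P"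
      unfolding P_def Q_def using A by (auto intro: lex_truthfulD[OF truthful])
    then obtain i i' where i: "lex_leads r D i"
        and "lex_leads r' (\<lambda>a. pmf Q a - pmf P a) i'"
      unfolding lex_dominates_iff_lex_leads D_def by blast
    then have i': "lex_leads r' (\<lambda>a. - D a) i'" unfolding D_def by simp
    have "i < pos r o2"
      using lex_leads_less_if_negative[OF i] pos_less_length[OF r] nth_pos[OF r] \<open>D o2 < 0\<close>
      by simp
    moreover have "\<forall>l < pos r o2. r' ! l = r ! l"
      using prefix_eq_if_pos_le[OF r r' no_rise] pos_less_length[OF r, of o2] by simp
    ultimately show False using not_lex_leads_opposite[OF i i'] by simp
  qed
qed

definition borda_weight :: "'o::finite list \<Rightarrow> 'o \<Rightarrow> real" where
  "borda_weight r a = real (CARD('o) - pos r a)"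

lemma sum_borda_weight:
  assumes "ranking (r::'o::finite list)"
  shows "(\<Sum>a\<in>UNIV. borda_weight r a) = real CARD('o) * (real CARD('o) + 1) / 2"
proof -
  have "(\<Sum>a\<in>UNIV. borda_weight r a) = (\<Sum>k<CARD('o). real (CARD('o) - k))"
    unfolding borda_weight_def by (rule sum.reindex_bij_betw[OF bij_betw_pos[OF assms]])
  also have "\<dots> = (\<Sum>i = Suc 0..CARD('o). real i)"
    by (rule sum.reindex_bij_witness[where i="\<lambda>i. CARD('o) - i" and j="\<lambda>k. CARD('o) - k"]) auto
  finally show ?thesis using double_gauss_sum_from_Suc_0[of "CARD('o)", where 'a=real] by simp
qed

lemma lex_leads_borda_weight_diff:
  assumes r: "ranking (r::'o::finite list)" and r': "ranking r'"
    and k: "k < length r" "r' ! k \<noteq> r ! k" and agree: "\<forall>l<k. r' ! l = r ! l"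
  shows "lex_leads r (\<lambda>a. borda_weight r a - borda_weight r' a) k"
proof -
  have "pos r' (r ! l) = pos r (r ! l)" if "l < k" for l
    using pos_eq_if_nth_eq[OF r r', of l] agree pos_nth[OF r, of l] that k(1) by simp
  moreover have "pos r (r ! k) < pos r' (r ! k)"
    using pos_gt_at_first_difference[OF r r' k agree] pos_nth[OF r k(1)] by simp
  moreover have "pos r' (r ! k) < CARD('o)"
    using pos_less_length[OF r'] length_ranking[OF r'] by simp
  ultimately show ?thesis
    using k(1) unfolding lex_leads_def borda_weight_def by auto
qed

lemma lex_leads_outcome_change_plus_borda:
  assumes r: "ranking (r::'o::finite list)" and r': "ranking r'" and "r \<noteq> r'"
    and "a > 0" "c > 0"
    and pm: "weakly_prefers r o1 o2 \<or> (\<exists>o3. prefers r o3 o2 \<and> pos r o3 < pos r' o3)"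
  shows "\<exists>i. lex_leads r (\<lambda>x. a * (of_bool (x = o1) - of_bool (x = o2))
                           + c * (borda_weight r x - borda_weight r' x)) i"
proof -
  define \<delta> where "\<delta> x = a * (of_bool (x = o1) - of_bool (x = o2))" for x
  define w where "w x = c * (borda_weight r x - borda_weight r' x)" for x
  have "length r' = length r" using length_ranking[OF r] length_ranking[OF r'] by simp
  then have "\<exists>l<length r. r' ! l \<noteq> r ! l" using \<open>r \<noteq> r'\<close> nth_equalityI by metis
  then obtain k where k: "k < length r" "r' ! k \<noteq> r ! k" and agree: "\<forall>l<k. r' ! l = r ! l"
    by (rule least_difference)
  have lead_w: "lex_leads r w k"
    unfolding w_def by (rule lex_leads_scale[OF lex_leads_borda_weight_diff[OF r r' k agree] \<open>c > 0\<close>])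
  txt \<open>Either the indicator term leads (at f(r)) or the Borda term leads (at k);
    pseudomonotonicity excludes that f(r') precedes f(r) in r and lies at or before k.\<close>
  consider (shift) "pos r o1 < pos r o2" "pos r o1 < k"
    | (borda) "o1 = o2 \<or> (k \<le> pos r o1 \<and> k < pos r o2)"
  proof (cases "o1 = o2 \<or> pos r o1 < pos r o2")
    case True
    then show thesis using that by (cases "pos r o1 < k") auto
  next
    case False
    moreover have "pos r o1 \<noteq> pos r o2"
      using False nth_pos[OF r, of o1] nth_pos[OF r, of o2] by metis
    ultimately have "pos r o2 < pos r o1" by simp
    moreover obtain o3 where o3: "pos r o3 < pos r o2" "pos r o3 < pos r' o3"
      using pm False unfolding weakly_prefers_def prefers_def by auto
    moreover have "k \<le> pos r o3"
    proof (rule ccontr)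
      assume "\<not> k \<le> pos r o3"
      then have "pos r' (r ! pos r o3) = pos r o3"
        using pos_eq_if_nth_eq[OF r r' pos_less_length[OF r, of o3]] agree by simp
      then show False using o3(2) nth_pos[OF r, of o3] by simp
    qed
    ultimately show thesis using that(2) by simp
  qed
  then show ?thesis
  proof cases
    case shift
    have "lex_leads r \<delta> (pos r o1)"
      unfolding \<delta>_def by (rule lex_leads_scale[OF lex_leads_outcome_shift[OF r shift(1)] \<open>a > 0\<close>])
    moreover have "\<forall>l\<le>pos r o1. w (r ! l) = 0"
      using lead_w shift(2) unfolding lex_leads_def by auto
    ultimately have "lex_leads r (\<lambda>x. \<delta> x + w x) (pos r o1)"
      by (intro lex_leads_add) auto
    then show ?thesis unfolding \<delta>_def w_def by blast
  next
    case borda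
    have "(r ! l \<noteq> o1 \<and> r ! l \<noteq> o2) \<or> o1 = o2" if "l < k" for l
      using borda that k(1) nth_eq_iff_pos_eq[OF r, of l] by auto
    then have "\<forall>l<k. \<delta> (r ! l) = 0" unfolding \<delta>_def by auto
    moreover have "r ! k \<noteq> o2 \<or> o1 = o2"
      using borda k(1) nth_eq_iff_pos_eq[OF r, of k] by auto
    then have "\<delta> (r ! k) \<ge> 0" unfolding \<delta>_def using \<open>a > 0\<close> by auto
    ultimately have "lex_leads r (\<lambda>x. w x + \<delta> x) k"
      by (intro lex_leads_add[OF lead_w])
    then have "lex_leads r (\<lambda>x. \<delta> x + w x) k" by (simp add: add.commute)
    then show ?thesis unfolding \<delta>_def w_def by blast
  qed
qed

lemma sum_fun_upd:
  assumes "finite A" "j \<in> A"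
  shows "(\<Sum>i\<in>A. g ((p(j := x)) i)) = g x + (\<Sum>i\<in>A - {j}. g (p i))"
  using assms by (simp add: sum.remove)

text \<open>The normaliser is n times the total Borda score m(m+1)/2 of a single ranking.\<close>

definition borda_mixture_density ::
  "(('n::finite \<Rightarrow> 'o::finite list) \<Rightarrow> 'o) \<Rightarrow> real \<Rightarrow> ('n \<Rightarrow> 'o list) \<Rightarrow> 'o \<Rightarrow> real" where
  "borda_mixture_density f e p a =
     (1 - e) * of_bool (f p = a)
     + e / (real CARD('n) * (real CARD('o) * (real CARD('o) + 1) / 2))
         * (\<Sum>j\<in>UNIV. borda_weight (p j) a)"

text \<open>Outside Sigma the mechanism is irrelevant; the case split only keeps
  embed_pmf away from lists that are not rankings.\<close>

definition borda_mixture ::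
  "('n::finite \<Rightarrow> 'o::finite list set) \<Rightarrow> (('n \<Rightarrow> 'o list) \<Rightarrow> 'o) \<Rightarrow> real
     \<Rightarrow> ('n \<Rightarrow> 'o list) \<Rightarrow> 'o pmf" where
  "borda_mixture Sig f e p =
     (if profile Sig p then embed_pmf (borda_mixture_density f e p) else return_pmf (f p))"

lemma borda_mixture_density_nonneg:
  assumes "0 \<le> e" "e \<le> 1"
  shows "borda_mixture_density f e p a \<ge> 0"
  using assms unfolding borda_mixture_density_def borda_weight_def
  by (intro add_nonneg_nonneg mult_nonneg_nonneg sum_nonneg divide_nonneg_pos) auto

lemma sum_borda_mixture_density:
  fixes p :: "'n::finite \<Rightarrow> 'o::finite list"
  assumes "\<forall>j. ranking (p j)"
  shows "(\<Sum>a\<in>UNIV. borda_mixture_density f e p a) = 1"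
proof -
  define S where "S = real CARD('n) * (real CARD('o) * (real CARD('o) + 1) / 2)"
  have "(\<Sum>a\<in>UNIV. \<Sum>j\<in>UNIV. borda_weight (p j) a) = (\<Sum>j\<in>UNIV. \<Sum>a\<in>UNIV. borda_weight (p j) a)"
    by (rule sum.swap)
  also have "\<dots> = (\<Sum>j\<in>(UNIV::'n set). real CARD('o) * (real CARD('o) + 1) / 2)"
    using sum_borda_weight assms by (intro sum.cong) auto
  also have "\<dots> = S" unfolding S_def by simp
  finally have "(\<Sum>a\<in>UNIV. \<Sum>j\<in>UNIV. borda_weight (p j) a) = S" .
  moreover have "S > 0" unfolding S_def by simp
  ultimately show ?thesis
    unfolding borda_mixture_density_def S_def[symmetric]
    by (simp add: sum.distrib sum_divide_distrib[symmetric] sum_distrib_left[symmetric])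
qed

lemma pmf_borda_mixture:
  assumes "\<forall>j. \<forall>r \<in> Sig j. ranking r" "profile Sig p" "0 \<le> e" "e \<le> 1"
  shows "pmf (borda_mixture Sig f e p) a = borda_mixture_density f e p a"
proof -
  have "\<forall>j. ranking (p j)" using assms(1,2) unfolding profile_def by auto
  then have "(\<Sum>x\<in>UNIV. borda_mixture_density f e p x) = 1"
    by (rule sum_borda_mixture_density)
  moreover have "(\<Sum>x\<in>UNIV. ennreal (borda_mixture_density f e p x))
      = ennreal (\<Sum>x\<in>UNIV. borda_mixture_density f e p x)"
    using borda_mixture_density_nonneg[OF assms(3,4)] by (rule sum_ennreal)
  ultimately have "(\<integral>\<^sup>+x. ennreal (borda_mixture_density f e p x) \<partial>count_space UNIV) = 1"
    by (simp add: nn_integral_count_space_finite)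
  with borda_mixture_density_nonneg[OF assms(3,4)]
  have "pmf (embed_pmf (borda_mixture_density f e p)) a = borda_mixture_density f e p a"
    by (rule pmf_embed_pmf)
  then show ?thesis using assms(2) unfolding borda_mixture_def by simp
qed

lemma borda_mixture_eps_implements:
  assumes "\<forall>j. \<forall>r \<in> Sig j. ranking r" "0 \<le> e" "e \<le> 1" "e \<le> \<epsilon>"
  shows "eps_implements Sig (borda_mixture Sig f e) f \<epsilon>"
  unfolding eps_implements_def
proof (intro allI impI)
  fix p assume "profile Sig p"
  then have "pmf (borda_mixture Sig f e p) (f p) = borda_mixture_density f e p (f p)"
    using assms by (intro pmf_borda_mixture)
  also have "\<dots> \<ge> 1 - e"
    using assms(2) unfolding borda_mixture_density_def borda_weight_def
    by (auto intro!: mult_nonneg_nonneg sum_nonneg divide_nonneg_pos)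
  finally show "pmf (borda_mixture Sig f e p) (f p) \<ge> 1 - \<epsilon>" using assms(4) by linarith
qed

lemma borda_mixture_density_fun_upd_diff:
  fixes p :: "'n::finite \<Rightarrow> 'o::finite list"
  shows "borda_mixture_density f e (p(j := r)) a - borda_mixture_density f e (p(j := r')) a
    = (1 - e) * (of_bool (f (p(j := r)) = a) - of_bool (f (p(j := r')) = a))
      + e / (real CARD('n) * (real CARD('o) * (real CARD('o) + 1) / 2))
        * (borda_weight r a - borda_weight r' a)"
proof -
  have "(\<Sum>i\<in>UNIV. borda_weight ((p(j := x)) i) a)
      = borda_weight x a + (\<Sum>i\<in>UNIV - {j}. borda_weight (p i) a)" for x
    by (rule sum_fun_upd) auto
  then show ?thesis unfolding borda_mixture_density_def
    by (simp add: algebra_simps add_divide_distrib diff_divide_distrib)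
qed

lemma borda_mixture_lex_truthful:
  fixes Sig :: "'n::finite \<Rightarrow> 'o::finite list set"
  assumes rankings: "\<forall>j. \<forall>r \<in> Sig j. ranking r" and pm: "pseudomonotone Sig f"
    and "0 < e" "e < 1"
  shows "lex_truthful Sig (borda_mixture Sig f e)"
  unfolding lex_truthful_def
proof (intro allI impI)
  fix j p r r'
  assume A: "profile Sig p \<and> r \<in> Sig j \<and> r' \<in> Sig j"
  define M where "M = borda_mixture Sig f e"
  show "M (p(j := r)) = M (p(j := r')) \<or> lex_dominates r (M (p(j := r))) (M (p(j := r')))"
  proof (cases "r = r'")
    case False
    have r: "ranking r" and r': "ranking r'" using A rankings by auto
    have "profile Sig (p(j := r))" "profile Sig (p(j := r'))"
      using A unfolding profile_def by auto
    then have pmf_diff: "pmf (M (p(j := r))) x - pmf (M (p(j := r'))) x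
        = borda_mixture_density f e (p(j := r)) x - borda_mixture_density f e (p(j := r')) x" for x
      unfolding M_def using rankings \<open>0 < e\<close> \<open>e < 1\<close> by (simp add: pmf_borda_mixture)
    have "weakly_prefers r (f (p(j := r))) (f (p(j := r')))
        \<or> (\<exists>o3. prefers r o3 (f (p(j := r'))) \<and> pos r o3 < pos r' o3)"
      using pm[unfolded pseudomonotone_def Let_def, rule_format, of p r j r'] A by simp
    moreover define c where "c = e / (real CARD('n) * (real CARD('o) * (real CARD('o) + 1) / 2))"
    moreover have "c > 0" unfolding c_def using \<open>0 < e\<close> by simp
    ultimately have "\<exists>i. lex_leads r
        (\<lambda>x. (1 - e) * (of_bool (x = f (p(j := r))) - of_bool (x = f (p(j := r'))))
             + c * (borda_weight r x - borda_weight r' x)) i"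
      using \<open>e < 1\<close> by (intro lex_leads_outcome_change_plus_borda[OF r r' False]) auto
    then obtain i where
      "lex_leads r (\<lambda>x. (1 - e) * (of_bool (x = f (p(j := r))) - of_bool (x = f (p(j := r'))))
                         + c * (borda_weight r x - borda_weight r' x)) i" ..
    then have "lex_leads r (\<lambda>x. pmf (M (p(j := r))) x - pmf (M (p(j := r'))) x) i"
      unfolding pmf_diff borda_mixture_density_fun_upd_diff c_def by (simp add: eq_commute)
    then show ?thesis unfolding lex_dominates_iff_lex_leads by blast
  qed simp
qed

theorem theorem4:
  fixes Sig :: "'n::finite \<Rightarrow> 'o::finite list set"
    and f :: "('n \<Rightarrow> 'o list) \<Rightarrow> 'o"
  assumes "\<forall>j. \<forall>r \<in> Sig j. ranking r"
  shows "(pseudomonotone Sig f \<longrightarrow>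
            (\<forall>\<epsilon>::real. \<epsilon> > 0 \<longrightarrow> (\<exists>M. lex_truthful Sig M \<and> eps_implements Sig M f \<epsilon>)))
       \<and> ((\<exists>\<epsilon>::real. \<epsilon> < 1/2 \<and> (\<exists>M. lex_truthful Sig M \<and> eps_implements Sig M f \<epsilon>))
            \<longrightarrow> pseudomonotone Sig f)"
proof (intro conjI impI allI)
  fix \<epsilon> :: real
  assume "pseudomonotone Sig f" "\<epsilon> > 0"
  define e where "e = min \<epsilon> (1/2)"
  have "0 < e" "e < 1" "e \<le> \<epsilon>" unfolding e_def using \<open>\<epsilon> > 0\<close> by auto
  then have "lex_truthful Sig (borda_mixture Sig f e)" "eps_implements Sig (borda_mixture Sig f e) f \<epsilon>"
    using borda_mixture_lex_truthful[OF assms \<open>pseudomonotone Sig f\<close>]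
      borda_mixture_eps_implements[OF assms] by auto
  then show "\<exists>M. lex_truthful Sig M \<and> eps_implements Sig M f \<epsilon>" by blast
next
  assume "\<exists>\<epsilon>::real. \<epsilon> < 1/2 \<and> (\<exists>M. lex_truthful Sig M \<and> eps_implements Sig M f \<epsilon>)"
  then show "pseudomonotone Sig f"
    using pseudomonotone_if_lex_truthful_implementation[OF assms] by blast
qed

end
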